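(* There exist a family $\mathcal F_0$ of $3$ axis-parallel rectangles and a constant $\varepsilon>0$ such that $\pi_L(\mathcal F_0)\ge \pi(\mathcal F_0)+\varepsilon$.
   Context: For a finite family $\mathcal F$ of closed axis-parallel rectangles in the plane, a point set $P\subset\mathbb R^2$ is $\mathcal F$-piercing if every translate of every rectangle in $\mathcal F$ contains a point of $P$. The density of a point set $P$ is $\limsup_{r\to\infty} |P\cap[-r,r]^2|/(2r)^2$. $\pi(\mathcal F)$ is the infimum of the densities of $\mathcal F$-piercing point sets, and $\pi_L(\mathcal F)$ is the infimum of the densities of $\mathcal F$-piercing lattices, where a lattice $\{iu+jv:i,j\in\mathbb Z\}$ ($u,v$ linearly independent) has density $1/|\det[u,v]|$. *)

theory Defs
  imports "HOL-Analysis.Analysis"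
begin

definition is_rect :: "(real \<times> real) set \<Rightarrow> bool" where
  "is_rect R \<longleftrightarrow> (\<exists>a1 b1 a2 b2. a1 < b1 \<and> a2 < b2 \<and> R = {a1..b1} \<times> {a2..b2})"

definition translate :: "real \<times> real \<Rightarrow> (real \<times> real) set \<Rightarrow> (real \<times> real) set" where
  "translate v R = (\<lambda>p. p + v) ` R"

definition piercing :: "(real \<times> real) set set \<Rightarrow> (real \<times> real) set \<Rightarrow> bool" where
  "piercing F P \<longleftrightarrow> (\<forall>R\<in>F. \<forall>v. translate v R \<inter> P \<noteq> {})"

definition box_count :: "(real \<times> real) set \<Rightarrow> real \<Rightarrow> ereal" where
  "box_count P r = (if finite (P \<inter> ({-r..r} \<times> {-r..r}))
      then ereal (real (card (P \<inter> ({-r..r} \<times> {-r..r})))) else \<infinity>)"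

definition density :: "(real \<times> real) set \<Rightarrow> ereal" where
  "density P = Limsup at_top (\<lambda>r. box_count P r / ereal ((2 * r)^2))"

definition pi_dens :: "(real \<times> real) set set \<Rightarrow> ereal" where
  "pi_dens F = Inf {density P | P. piercing F P}"

definition lattice :: "real \<times> real \<Rightarrow> real \<times> real \<Rightarrow> (real \<times> real) set" where
  "lattice u v = {of_int i *\<^sub>R u + of_int j *\<^sub>R v | i j. True}"

definition det2 :: "real \<times> real \<Rightarrow> real \<times> real \<Rightarrow> real" where
  "det2 u v = fst u * snd v - snd u * fst v"

definition pi_lat :: "(real \<times> real) set set \<Rightarrow> ereal" where
  "pi_lat F = Inf {ereal (1 / \<bar>det2 u v\<bar>) | u v. det2 u v \<noteq> 0 \<and> piercing F (lattice u v)}"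

end

(* The family consists of the 1 x 4, 2 x 2 and 4 x 1 boxes.

   The integer points whose residues mod 4 lie in {(0,3), (2,2), (1,1), (3,1), (2,0)} meet every
   translate of the three boxes, and they have density 5/16 < 63/200.

   For a lattice of determinant D, the determinant of any two lattice points is an integer multiple
   of D. Suppose a lattice pierces the family and |D| >= 63/20. A nonzero lattice point of least
   l1-norm in [-21/20, 21/20]^2 would leave some translate of the 2 x 2 box empty, so there is
   none. Hence the lattice points a = (p, A) and c = (E, q) found in suitable translates of the
   1 x 4 and 4 x 1 boxes have |A|, |E| > 21/20, which forces |det(a, c)| = |D|: a and c form a
   basis. Each further translated box must then contain i a + j c for one of a few small (i, j),
   and the resulting constraints on p, A, E, q give |det(a, c)| < 63/20. So every piercing
   lattice has density above 20/63 = 63/200 + 31/12600. *)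

theory Submission
  imports Defs
begin

definition hits_boxes :: "(real \<times> real) set \<Rightarrow> real \<Rightarrow> real \<Rightarrow> bool" where
  "hits_boxes L \<alpha> \<beta> \<longleftrightarrow>
     (\<forall>x0 y0. \<exists>p\<in>L. x0 \<le> fst p \<and> fst p \<le> x0 + \<alpha> \<and> y0 \<le> snd p \<and> snd p \<le> y0 + \<beta>)"

(* Stated for arbitrary point sets rather than for lattice u v, so that it is evidently preserved
   by the reflections used below. *)
definition det_multiples :: "(real \<times> real) set \<Rightarrow> real \<Rightarrow> bool" where
  "det_multiples L D \<longleftrightarrow> (\<forall>p\<in>L. \<forall>q\<in>L. \<exists>k::int. det2 p q = of_int k * D)"

lemma hits_boxesE:
  assumes "hits_boxes L \<alpha> \<beta>"
  obtains p where "p \<in> L" "x0 \<le> fst p" "fst p \<le> x0 + \<alpha>" "y0 \<le> snd p" "snd p \<le> y0 + \<beta>"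
  using assms unfolding hits_boxes_def by blast

lemma mem_translate_box:
  "p \<in> translate v ({0..\<alpha>} \<times> {0..\<beta>}) \<longleftrightarrow>
     fst v \<le> fst p \<and> fst p \<le> fst v + \<alpha> \<and> snd v \<le> snd p \<and> snd p \<le> snd v + \<beta>"
proof
  assume "p \<in> translate v ({0..\<alpha>} \<times> {0..\<beta>})"
  then obtain q where "q \<in> {0..\<alpha>} \<times> {0..\<beta>}" "p = q + v" unfolding translate_def by blast
  then show "fst v \<le> fst p \<and> fst p \<le> fst v + \<alpha> \<and> snd v \<le> snd p \<and> snd p \<le> snd v + \<beta>"
    by auto
next
  assume "fst v \<le> fst p \<and> fst p \<le> fst v + \<alpha> \<and> snd v \<le> snd p \<and> snd p \<le> snd v + \<beta>"
  then have "p - v \<in> {0..\<alpha>} \<times> {0..\<beta>}" by (auto simp: mem_Times_iff)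
  then show "p \<in> translate v ({0..\<alpha>} \<times> {0..\<beta>})"
    unfolding translate_def by (rule image_eqI[rotated]) simp
qed

lemma hits_boxes_iff_translates:
  "hits_boxes P \<alpha> \<beta> \<longleftrightarrow> (\<forall>v. translate v ({0..\<alpha>} \<times> {0..\<beta>}) \<inter> P \<noteq> {})"
proof -
  have "translate v ({0..\<alpha>} \<times> {0..\<beta>}) \<inter> P \<noteq> {} \<longleftrightarrow>
      (\<exists>p\<in>P. fst v \<le> fst p \<and> fst p \<le> fst v + \<alpha> \<and> snd v \<le> snd p \<and> snd p \<le> snd v + \<beta>)" for v
    using mem_translate_box[of _ v \<alpha> \<beta>] by blast
  then show ?thesis unfolding hits_boxes_def by (simp add: split_paired_All)
qed

lemma abs_det_le:
  fixes x y z u X Y Z U :: real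
  assumes "\<bar>x\<bar> \<le> X" "\<bar>y\<bar> \<le> Y" "\<bar>z\<bar> \<le> Z" "\<bar>u\<bar> \<le> U"
  shows "\<bar>x * y - z * u\<bar> \<le> X * Y + Z * U"
proof -
  have "\<bar>x * y - z * u\<bar> \<le> \<bar>x\<bar> * \<bar>y\<bar> + \<bar>z\<bar> * \<bar>u\<bar>"
    using abs_triangle_ineq4[of "x * y" "z * u"] by (simp add: abs_mult)
  also have "\<dots> \<le> X * Y + Z * U"
    using assms by (intro add_mono mult_mono) auto
  finally show ?thesis .
qed

lemma det_multiples_basis_coords:
  assumes L: "det_multiples L D" and "a \<in> L" "c \<in> L" "w \<in> L"
    and ac: "\<bar>det2 a c\<bar> = \<bar>D\<bar>" and "D \<noteq> 0"
  obtains i j :: int where "w = of_int i *\<^sub>R a + of_int j *\<^sub>R c"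
    "det2 w c = of_int i * det2 a c" "det2 a w = of_int j * det2 a c"
proof -
  obtain k l :: int where k: "det2 w c = of_int k * D" and l: "det2 a w = of_int l * D"
    using L \<open>a \<in> L\<close> \<open>c \<in> L\<close> \<open>w \<in> L\<close> unfolding det_multiples_def by blast
  obtain \<sigma> :: int where \<sigma>: "of_int \<sigma> * of_int \<sigma> = (1::real)" "det2 a c = of_int \<sigma> * D"
  proof (cases "det2 a c = D")
    case True
    then show ?thesis by (intro that[of 1]) simp_all
  next
    case False
    then have "det2 a c = - D" using ac by (auto simp: abs_eq_iff)
    then show ?thesis by (intro that[of "-1"]) simp_all
  qed
  define i j where "i = \<sigma> * k" and "j = \<sigma> * l"
  have i: "det2 w c = of_int i * det2 a c" and j: "det2 a w = of_int j * det2 a c"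
    unfolding i_def j_def using k l \<sigma>
    by (simp_all add: algebra_simps)
  have "det2 a c *\<^sub>R w = det2 w c *\<^sub>R a + det2 a w *\<^sub>R c"
    by (simp add: det2_def prod_eq_iff algebra_simps)
  also have "\<dots> = det2 a c *\<^sub>R (of_int i *\<^sub>R a + of_int j *\<^sub>R c)"
    unfolding i j by (simp add: scaleR_add_right mult.commute)
  finally have "w = of_int i *\<^sub>R a + of_int j *\<^sub>R c"
    using ac \<open>D \<noteq> 0\<close> by (auto simp del: abs_eq_iff)
  then show ?thesis using i j by (rule that)
qed

lemma det_multiples_abs_det_cases:
  assumes "det_multiples L D" "p \<in> L" "q \<in> L" "\<bar>det2 p q\<bar> < 2 * \<bar>D\<bar>"
  shows "det2 p q = 0 \<or> \<bar>det2 p q\<bar> = \<bar>D\<bar>"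
proof -
  obtain k :: int where k: "det2 p q = of_int k * D"
    using assms(1-3) unfolding det_multiples_def by blast
  then have "\<bar>of_int k\<bar> * \<bar>D\<bar> < 2 * \<bar>D\<bar>" using assms(4) by (simp add: abs_mult)
  then have "\<bar>of_int k\<bar> < (2::real)" by (rule mult_right_less_imp_less) simp
  then have "k \<in> {-1, 0, 1}" by auto
  then show ?thesis using k by auto
qed

lemma hits_boxes_basis_point:
  assumes L: "det_multiples L D" "hits_boxes L \<alpha> \<beta>" and "a \<in> L" "c \<in> L"
    and ac: "\<bar>det2 a c\<bar> = \<bar>D\<bar>" and "D \<noteq> 0"
    and bounds: "\<And>u v. x \<le> u \<Longrightarrow> u \<le> x + \<alpha> \<Longrightarrow> y \<le> v \<Longrightarrow> v \<le> y + \<beta> \<Longrightarrow>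
      \<bar>det2 (u, v) c\<bar> < of_int m * \<bar>D\<bar> \<and> \<bar>det2 a (u, v)\<bar> < of_int n * \<bar>D\<bar>"
  obtains i j :: int where "\<bar>i\<bar> < m" "\<bar>j\<bar> < n"
    "x \<le> of_int i * fst a + of_int j * fst c" "of_int i * fst a + of_int j * fst c \<le> x + \<alpha>"
    "y \<le> of_int i * snd a + of_int j * snd c" "of_int i * snd a + of_int j * snd c \<le> y + \<beta>"
proof -
  obtain w where "w \<in> L" and box: "x \<le> fst w" "fst w \<le> x + \<alpha>" "y \<le> snd w" "snd w \<le> y + \<beta>"
    using hits_boxesE[OF L(2)] .
  obtain i j :: int where w: "w = of_int i *\<^sub>R a + of_int j *\<^sub>R c"
    and i: "det2 w c = of_int i * det2 a c" and j: "det2 a w = of_int j * det2 a c"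
    using det_multiples_basis_coords[OF L(1) \<open>a \<in> L\<close> \<open>c \<in> L\<close> \<open>w \<in> L\<close> ac \<open>D \<noteq> 0\<close>] .
  have "\<bar>of_int i\<bar> * \<bar>D\<bar> < of_int m * \<bar>D\<bar>" "\<bar>of_int j\<bar> * \<bar>D\<bar> < of_int n * \<bar>D\<bar>"
    using bounds[OF box] i j ac by (simp_all add: abs_mult)
  then have "\<bar>i\<bar> < m" "\<bar>j\<bar> < n"
    using \<open>D \<noteq> 0\<close> by (simp_all add: mult_less_cancel_right)
  then show ?thesis using that box unfolding w by simp
qed

lemma det_multiples_image:
  assumes "det_multiples L D" and "\<And>p q. \<bar>det2 (f p) (f q)\<bar> = \<bar>det2 p q\<bar>"
  shows "det_multiples (f ` L) D"
  unfolding det_multiples_def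
proof (intro ballI)
  fix p q assume "p \<in> f ` L" "q \<in> f ` L"
  then obtain p' q' where "p' \<in> L" "q' \<in> L" "p = f p'" "q = f q'" by blast
  moreover obtain k :: int where "det2 p' q' = of_int k * D"
    using assms(1) \<open>p' \<in> L\<close> \<open>q' \<in> L\<close> unfolding det_multiples_def by blast
  ultimately have "det2 p q = of_int k * D \<or> det2 p q = of_int (- k) * D"
    using assms(2)[of p' q'] by (auto simp: abs_eq_iff)
  then show "\<exists>k::int. det2 p q = of_int k * D" by blast
qed

lemma det2_apsnd_uminus [simp]: "det2 (apsnd uminus p) (apsnd uminus q) = - det2 p q"
  by (simp add: det2_def apsnd_def map_prod_def split_def)

lemma det2_swap [simp]: "det2 (prod.swap p) (prod.swap q) = - det2 p q"
  by (simp add: det2_def)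

lemma hits_boxes_apsnd_uminus:
  assumes "hits_boxes L \<alpha> \<beta>"
  shows "hits_boxes (apsnd uminus ` L) \<alpha> \<beta>"
  unfolding hits_boxes_def
proof (intro allI)
  fix x y
  obtain p where "p \<in> L" "x \<le> fst p" "fst p \<le> x + \<alpha>" "- y - \<beta> \<le> snd p" "snd p \<le> - y - \<beta> + \<beta>"
    using hits_boxesE[OF assms] .
  then show "\<exists>p\<in>apsnd uminus ` L. x \<le> fst p \<and> fst p \<le> x + \<alpha> \<and> y \<le> snd p \<and> snd p \<le> y + \<beta>"
    by (intro bexI[of _ "apsnd uminus p"]) auto
qed

lemma hits_boxes_swap:
  assumes "hits_boxes L \<alpha> \<beta>"
  shows "hits_boxes (prod.swap ` L) \<beta> \<alpha>"
  unfolding hits_boxes_def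
proof (intro allI)
  fix x y
  obtain p where "p \<in> L" "y \<le> fst p" "fst p \<le> y + \<alpha>" "x \<le> snd p" "snd p \<le> x + \<beta>"
    using hits_boxesE[OF assms] .
  then show "\<exists>p\<in>prod.swap ` L. x \<le> fst p \<and> fst p \<le> x + \<beta> \<and> y \<le> snd p \<and> snd p \<le> y + \<alpha>"
    by (intro bexI[of _ "prod.swap p"]) auto
qed

section \<open>Short vectors\<close>

lemma hits_boxes_abs_det_le:
  assumes L: "det_multiples L D" "hits_boxes L \<alpha> \<beta>" and w: "w \<in> L" "w \<noteq> 0"
  shows "\<bar>D\<bar> \<le> \<beta> * \<bar>fst w\<bar> + \<alpha> * \<bar>snd w\<bar>"
proof (rule ccontr)
  assume short: "\<not> ?thesis"
  define n where "n = (fst w)\<^sup>2 + (snd w)\<^sup>2"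
  have "n > 0" using w(2) by (auto simp: n_def prod_eq_iff sum_power2_gt_zero_iff)
  \<comment> \<open>the centre of the box is placed halfway between two lattice lines parallel to w\<close>
  define t where "t = D / (2 * n)"
  define c where "c = t *\<^sub>R (- snd w, fst w)"
  have "det2 w c = t * n"
    by (simp add: c_def det2_def n_def power2_eq_square algebra_simps)
  then have c: "det2 w c = D / 2" using \<open>n > 0\<close> by (simp add: t_def)
  obtain p where "p \<in> L" and box: "fst c - \<alpha>/2 \<le> fst p" "fst p \<le> fst c - \<alpha>/2 + \<alpha>"
      "snd c - \<beta>/2 \<le> snd p" "snd p \<le> snd c - \<beta>/2 + \<beta>"
    using hits_boxesE[OF L(2)] .
  obtain k :: int where k: "det2 w p = of_int k * D"
    using L(1) w(1) \<open>p \<in> L\<close> unfolding det_multiples_def by blast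
  have "\<bar>of_int k - 1/2\<bar> * \<bar>D\<bar> = \<bar>det2 w p - D / 2\<bar>"
    by (simp add: k left_diff_distrib flip: abs_mult)
  also have "det2 w p - D / 2 = fst w * (snd p - snd c) - snd w * (fst p - fst c)"
    using c by (simp add: det2_def algebra_simps)
  also have "\<bar>\<dots>\<bar> \<le> \<bar>fst w\<bar> * (\<beta>/2) + \<bar>snd w\<bar> * (\<alpha>/2)"
    by (rule abs_det_le) (simp_all only: abs_le_iff, use box in auto)
  also have "\<dots> < (1/2) * \<bar>D\<bar>"
    using short by (simp add: algebra_simps)
  finally have "\<bar>of_int k - 1/2\<bar> * \<bar>D\<bar> < (1/2) * \<bar>D\<bar>" .
  then have "\<bar>of_int k - 1/2\<bar> < (1/2 :: real)" by (rule mult_right_less_imp_less) simp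
  then have "0 < k" "k < 1" by linarith+
  then show False by simp
qed

lemma short_primitive_vector_not_hits_square:
  assumes L: "det_multiples L D" "63/20 \<le> \<bar>D\<bar>" and w: "(X, Y) \<in> L"
    and X: "0 < X" "X \<le> 21/20" and Y: "0 < Y" "Y \<le> 21/20"
    and primitive: "\<And>\<tau>. 0 < \<tau> \<Longrightarrow> \<tau> < 1 \<Longrightarrow> \<tau> *\<^sub>R (X, Y) \<notin> L"
  shows "\<not> hits_boxes L 2 2"
proof
  assume "hits_boxes L 2 2"
  \<comment> \<open>every point p of this square has \<bar>det2 (X, Y) p\<bar> < 63/20, so a lattice point in it
    lies on the open segment from 0 to (X, Y)\<close>
  then obtain p where "p \<in> L" and box: "99/100 * X - 2 \<le> fst p" "fst p \<le> 99/100 * X - 2 + 2"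
      "Y / 100 \<le> snd p" "snd p \<le> Y / 100 + 2"
    by (rule hits_boxesE)
  have "X * (Y / 100) \<le> X * snd p" "X * snd p \<le> X * (Y / 100 + 2)"
    "Y * fst p \<le> Y * (99/100 * X)" "Y * (99/100 * X - 2) \<le> Y * fst p"
    using X Y box by (simp_all add: mult_left_mono)
  moreover have "X * Y \<le> 21/20 * (21/20)" by (rule mult_mono) (use X Y in auto)
  moreover have "0 \<le> (21/20 - X) * (21/20 - Y)" using X Y by simp
  ultimately have "\<bar>det2 (X, Y) p\<bar> < 63/20"
    unfolding det2_def abs_less_iff by (simp add: algebra_simps)
  then have "det2 (X, Y) p = 0" using det_multiples_abs_det_cases[OF L(1) w \<open>p \<in> L\<close>] L(2) by auto
  define \<tau> where "\<tau> = fst p / X"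
  have "p = \<tau> *\<^sub>R (X, Y)"
  proof -
    have "X * snd p = X * (\<tau> * Y)"
      using \<open>det2 (X, Y) p = 0\<close> X by (simp add: \<tau>_def det2_def)
    then have "snd p = \<tau> * Y" using X by (simp only: mult_cancel_left) simp
    moreover have "fst p = \<tau> * X" using X by (simp add: \<tau>_def)
    ultimately show ?thesis by (simp add: prod_eq_iff)
  qed
  moreover have "\<tau> * X \<le> 99/100 * X" "1/100 * Y \<le> \<tau> * Y"
    using box \<open>p = \<tau> *\<^sub>R (X, Y)\<close> by auto
  then have "0 < \<tau>" "\<tau> < 1" using X Y by (simp_all add: mult_le_cancel_right)
  ultimately show False using primitive \<open>p \<in> L\<close> by blast
qed

lemma short_primitive_vector_off_axes_not_hits_square:
  assumes L: "det_multiples L D" "63/20 \<le> \<bar>D\<bar>" and sym: "\<And>v. v \<in> L \<Longrightarrow> - v \<in> L"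
    and w: "(x, y) \<in> L" "x \<noteq> 0" "y \<noteq> 0" "\<bar>x\<bar> \<le> 21/20" "\<bar>y\<bar> \<le> 21/20"
    and primitive: "\<And>\<tau>. 0 < \<tau> \<Longrightarrow> \<tau> < 1 \<Longrightarrow> \<tau> *\<^sub>R (x, y) \<notin> L"
  shows "\<not> hits_boxes L 2 2"
proof -
  obtain X Y where XY: "(X, Y) \<in> L" "0 < X" "X \<le> 21/20" "Y \<noteq> 0" "\<bar>Y\<bar> \<le> 21/20"
    and primitive': "\<And>\<tau>. 0 < \<tau> \<Longrightarrow> \<tau> < 1 \<Longrightarrow> \<tau> *\<^sub>R (X, Y) \<notin> L"
  proof (cases "0 < x")
    case True
    then show ?thesis using w primitive by (intro that[of x y]) auto
  next
    case False
    have "(- x, - y) \<in> L" using sym[OF w(1)] by simp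
    moreover have "\<tau> *\<^sub>R (- x, - y) \<notin> L" if "0 < \<tau>" "\<tau> < 1" for \<tau>
      using primitive[OF that] sym[of "\<tau> *\<^sub>R (- x, - y)"] by auto
    ultimately show ?thesis using False w by (intro that[of "- x" "- y"]) auto
  qed
  show ?thesis
  proof (cases "0 < Y")
    case True
    then show ?thesis
      using short_primitive_vector_not_hits_square[OF L XY(1,2,3) True] XY(5) primitive' by simp
  next
    case False
    have inj: "inj (apsnd (uminus :: real \<Rightarrow> real))" by (rule injI) (simp add: prod_eq_iff)
    have "\<not> hits_boxes (apsnd uminus ` L) 2 2"
    proof (rule short_primitive_vector_not_hits_square[OF det_multiples_image[OF L(1)] L(2) _ XY(2,3)])
      show "(X, - Y) \<in> apsnd uminus ` L" using XY(1) by force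
      show "0 < - Y" "- Y \<le> 21/20" using False XY(4,5) by auto
      fix \<tau> :: real assume "0 < \<tau>" "\<tau> < 1"
      moreover have "\<tau> *\<^sub>R (X, - Y) = apsnd uminus (\<tau> *\<^sub>R (X, Y))" by simp
      ultimately show "\<tau> *\<^sub>R (X, - Y) \<notin> apsnd uminus ` L"
        using primitive' inj_image_mem_iff[OF inj, of "\<tau> *\<^sub>R (X, Y)" L] by metis
    qed simp
    then show ?thesis using hits_boxes_apsnd_uminus by blast
  qed
qed

definition no_short_vector :: "(real \<times> real) set \<Rightarrow> real \<Rightarrow> bool" where
  "no_short_vector L r \<longleftrightarrow> (\<forall>w\<in>L. w \<noteq> 0 \<longrightarrow> r < \<bar>fst w\<bar> \<or> r < \<bar>snd w\<bar>)"

lemma no_short_vector_if_hits_square: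
  assumes L: "det_multiples L D" "63/20 \<le> \<bar>D\<bar>" "hits_boxes L 2 2"
    and sym: "\<And>w. w \<in> L \<Longrightarrow> - w \<in> L"
    and fin: "finite {w \<in> L. \<bar>fst w\<bar> \<le> 21/20 \<and> \<bar>snd w\<bar> \<le> 21/20}"
  shows "no_short_vector L (21/20)"
proof (rule ccontr)
  define M where "M = {w \<in> L. w \<noteq> 0 \<and> \<bar>fst w\<bar> \<le> 21/20 \<and> \<bar>snd w\<bar> \<le> 21/20}"
  define len :: "real \<times> real \<Rightarrow> real" where "len w = \<bar>fst w\<bar> + \<bar>snd w\<bar>" for w
  assume "\<not> no_short_vector L (21/20)"
  then obtain v where "v \<in> L" "v \<noteq> 0" "\<bar>fst v\<bar> \<le> 21/20" "\<bar>snd v\<bar> \<le> 21/20"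
    unfolding no_short_vector_def by (auto simp: not_less)
  then have "M \<noteq> {}" unfolding M_def by blast
  moreover have "finite M" using fin by (rule finite_subset[rotated]) (auto simp: M_def)
  ultimately obtain w where "w \<in> M" and min: "\<And>v. v \<in> M \<Longrightarrow> \<not> len v < len w"
    using ex_is_arg_min_if_finite[of M len] unfolding is_arg_min_def by blast
  obtain x y where w: "w = (x, y)" by (cases w)
  have xy: "(x, y) \<in> L" "(x, y) \<noteq> 0" "\<bar>x\<bar> \<le> 21/20" "\<bar>y\<bar> \<le> 21/20"
    using \<open>w \<in> M\<close> unfolding M_def w by simp_all
  have primitive: "\<tau> *\<^sub>R (x, y) \<notin> L" if "0 < \<tau>" "\<tau> < 1" for \<tau>
  proof
    assume "\<tau> *\<^sub>R (x, y) \<in> L"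
    moreover have "\<tau> * \<bar>x\<bar> \<le> \<bar>x\<bar>" "\<tau> * \<bar>y\<bar> \<le> \<bar>y\<bar>"
      using that by (simp_all add: mult_left_le_one_le)
    ultimately have "\<tau> *\<^sub>R (x, y) \<in> M" using that xy by (auto simp: M_def abs_mult zero_prod_def)
    moreover have "0 < len w" using xy by (auto simp: len_def w zero_prod_def)
    then have "len (\<tau> *\<^sub>R (x, y)) < len w"
      using that by (simp add: len_def w abs_mult flip: distrib_left)
    ultimately show False using min by blast
  qed
  show False
  proof (cases "x = 0 \<or> y = 0")
    case True
    have "\<bar>D\<bar> \<le> 2 * \<bar>x\<bar> + 2 * \<bar>y\<bar>"
      using hits_boxes_abs_det_le[OF L(1,3) xy(1,2)] by simp
    then show False using True xy(3,4) L(2) by auto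
  next
    case False
    then show False
      using short_primitive_vector_off_axes_not_hits_square[OF L(1,2) sym xy(1) _ _ xy(3,4) primitive] L(3)
      by blast
  qed
qed

lemma no_short_vector_apsnd_uminus:
  "no_short_vector L r \<Longrightarrow> no_short_vector (apsnd uminus ` L) r"
  unfolding no_short_vector_def by (auto simp: zero_prod_def)

lemma uminus_mem_apsnd_uminus_image:
  assumes "\<And>w. w \<in> L \<Longrightarrow> - w \<in> L" and "w \<in> apsnd uminus ` L"
  shows "- w \<in> apsnd uminus ` L"
proof -
  obtain w' where "w' \<in> L" "w = apsnd uminus w'" using assms(2) by blast
  then have "- w = apsnd uminus (- w')" by (simp add: prod_eq_iff)
  then show ?thesis using assms(1)[OF \<open>w' \<in> L\<close>] by blast
qed

section \<open>A short basis\<close>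

(* Here a = (p, A) and c = (E, q) or c = (- E, q) with p, q in [1/1000, 1001/1000] and
   A, E in (21/20, 2] form a basis (|det2 a c| = |D|). Each constraint lemma places a translated box
   where every point has small coordinates i, j in this basis, and checks the candidates i a + j c. *)
lemma plus_horizontal_constraint:
  fixes p A E q :: real
  assumes L: "det_multiples L D" "63/20 \<le> \<bar>D\<bar>" "hits_boxes L 4 1"
    and a: "(p, A) \<in> L" and c: "(E, q) \<in> L" and det: "\<bar>det2 (p, A) (E, q)\<bar> = \<bar>D\<bar>"
    and p: "1/1000 \<le> p" "p \<le> 1001/1000" and A: "21/20 < A" "A \<le> 2"
    and E: "21/20 < E" "E \<le> 2" and q: "1/1000 \<le> q" "q \<le> 1001/1000"
  shows "(A - q \<le> 1001/1000 \<and> 2*E \<le> p + 4001/1000) \<or> (A - 2*q \<le> 1001/1000 \<and> 3*E - 4001/1000 \<le> p)"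
proof -
  have bounds: "\<bar>det2 (u, v) (E, q)\<bar> < of_int 2 * \<bar>D\<bar> \<and> \<bar>det2 (p, A) (u, v)\<bar> < of_int 3 * \<bar>D\<bar>"
    if "E - 4001/1000 \<le> u" "u \<le> E - 4001/1000 + 4" "1/1000 \<le> v" "v \<le> 1/1000 + 1" for u v
  proof -
    have "\<bar>u * q - v * E\<bar> \<le> 3 * (1001/1000) + (1001/1000) * 2"
      by (rule abs_det_le) (use that q E in \<open>auto simp: abs_le_iff\<close>)
    moreover have "\<bar>p * v - A * u\<bar> \<le> (1001/1000) * (1001/1000) + 2 * 3"
      by (rule abs_det_le) (use that p A E in \<open>auto simp: abs_le_iff\<close>)
    ultimately show ?thesis using L(2) by (simp add: det2_def)
  qed
  obtain i j :: int where "\<bar>i\<bar> < 2" "\<bar>j\<bar> < 3"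
    "E - 4001/1000 \<le> of_int i * p + of_int j * E" "of_int i * p + of_int j * E \<le> E - 4001/1000 + 4"
    "1/1000 \<le> of_int i * A + of_int j * q" "of_int i * A + of_int j * q \<le> 1/1000 + 1"
    by (rule hits_boxes_basis_point[where x = "E - 4001/1000" and y = "1/1000", OF L(1,3) a c det _ bounds]) (use L(2) in auto)
  moreover have "i \<in> {-1, 0, 1}" "j \<in> {-2, -1, 0, 1, 2}" using calculation(1,2) by auto
  ultimately show ?thesis using p A E q by auto
qed

lemma plus_det_estimate_steep:
  fixes p q A E :: real
  assumes "0 \<le> p" "p \<le> 1001/1000" "3*E - 4001/1000 \<le> p" "0 \<le> q"
    "0 \<le> A" "A \<le> 2" "A \<le> 2*q + 1001/1000" "0 \<le> E"
  shows "A*E - p*q < 63/20"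
proof (rule ccontr)
  assume big: "\<not> A*E - p*q < 63/20"
  have "0 \<le> p*q" using assms by simp
  have "A*E \<le> 2*E" by (rule mult_right_mono) (use assms in auto)
  then have E: "63/40 \<le> E" "E \<le> 5002/3000" using big \<open>0 \<le> p*q\<close> assms by linarith+
  have "A*E \<le> A*(5002/3000)" by (rule mult_left_mono) (use assms E in auto)
  then have "444/1000 \<le> q" using big \<open>0 \<le> p*q\<close> assms by linarith
  moreover have "724/1000 \<le> p" using E assms by linarith
  ultimately have "(724/1000)*(444/1000) \<le> p*q" by (intro mult_mono) auto
  moreover have "A*E \<le> 2*(5002/3000)" by (rule mult_mono) (use assms E in auto)
  ultimately show False using big by linarith
qed

lemma plus_det_estimate:
  fixes p A E q :: real
  assumes X: "(A - q \<le> 1001/1000 \<and> 2*E \<le> p + 4001/1000) \<or> (A - 2*q \<le> 1001/1000 \<and> 3*E - 4001/1000 \<le> p)"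
    and Y: "(E - p \<le> 1001/1000 \<and> 2*A \<le> q + 4001/1000) \<or> (E - 2*p \<le> 1001/1000 \<and> 3*A - 4001/1000 \<le> q)"
    and p: "1/1000 \<le> p" "p \<le> 1001/1000" and A: "21/20 < A" "A \<le> 2"
    and E: "21/20 < E" "E \<le> 2" and q: "1/1000 \<le> q" "q \<le> 1001/1000"
  shows "A*E - p*q < 63/20"
proof -
  consider "A - q \<le> 1001/1000" "E - p \<le> 1001/1000"
    | "A - 2*q \<le> 1001/1000" "3*E - 4001/1000 \<le> p"
    | "E - 2*p \<le> 1001/1000" "3*A - 4001/1000 \<le> q"
    using X Y by blast
  then show ?thesis
  proof cases
    case 1
    have "A*E \<le> (q + 1001/1000)*(p + 1001/1000)"
      by (rule mult_mono) (use 1 p q E in auto)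
    then show ?thesis using p q by (simp add: algebra_simps)
  next
    case 2
    then show ?thesis by (intro plus_det_estimate_steep) (use p q A E in auto)
  next
    case 3
    then have "E*A - q*p < 63/20" by (intro plus_det_estimate_steep) (use p q A E in auto)
    then show ?thesis by (simp add: mult.commute)
  qed
qed

lemma plus_case_impossible:
  fixes p A E q :: real
  assumes L: "det_multiples L D" "63/20 \<le> \<bar>D\<bar>" "hits_boxes L 4 1" "hits_boxes L 1 4"
    and a: "(p, A) \<in> L" and c: "(E, q) \<in> L" and det: "\<bar>det2 (p, A) (E, q)\<bar> = \<bar>D\<bar>"
    and p: "1/1000 \<le> p" "p \<le> 1001/1000" and A: "21/20 < A" "A \<le> 2"
    and E: "21/20 < E" "E \<le> 2" and q: "1/1000 \<le> q" "q \<le> 1001/1000"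
  shows False
proof -
  have X: "(A - q \<le> 1001/1000 \<and> 2*E \<le> p + 4001/1000) \<or> (A - 2*q \<le> 1001/1000 \<and> 3*E - 4001/1000 \<le> p)"
    by (rule plus_horizontal_constraint[OF L(1-3) a c det p A E q])
  \<comment> \<open>the reflection in the diagonal swaps the roles of (p, A) and (E, q)\<close>
  have Y: "(E - p \<le> 1001/1000 \<and> 2*A \<le> q + 4001/1000) \<or> (E - 2*p \<le> 1001/1000 \<and> 3*A - 4001/1000 \<le> q)"
  proof (rule plus_horizontal_constraint[of "prod.swap ` L" D])
    show "det_multiples (prod.swap ` L) D" using L(1) by (rule det_multiples_image) simp
    show "hits_boxes (prod.swap ` L) 4 1" using L(4) by (rule hits_boxes_swap)
    show "(q, E) \<in> prod.swap ` L" "(A, p) \<in> prod.swap ` L"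
      using a c by (auto intro: image_eqI[of _ prod.swap])
    show "\<bar>det2 (q, E) (A, p)\<bar> = \<bar>D\<bar>" using det by (simp add: det2_def algebra_simps)
  qed (use L(2) p A E q in auto)
  have "\<bar>D\<bar> = A*E - p*q"
  proof -
    have "21/20 * (21/20) < A*E" by (rule mult_strict_mono) (use A E in auto)
    moreover have "p*q \<le> 1001/1000 * (1001/1000)" by (rule mult_mono) (use p q in auto)
    ultimately show ?thesis using det by (simp add: det2_def)
  qed
  then show False using plus_det_estimate[OF X Y p A E q] L(2) by linarith
qed

lemma minus_horizontal_constraint:
  fixes p A E q :: real
  assumes L: "det_multiples L D" "63/20 \<le> \<bar>D\<bar>" "hits_boxes L 4 1"
    and a: "(p, A) \<in> L" and c: "(- E, q) \<in> L" and det: "\<bar>det2 (p, A) (- E, q)\<bar> = \<bar>D\<bar>"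
    and p: "1/1000 \<le> p" "p \<le> 1001/1000" and A: "21/20 < A" "A \<le> 2"
    and E: "21/20 < E" "E \<le> 2" and q: "1/1000 \<le> q" "q \<le> 1001/1000"
  shows "p + 2*E \<le> 4001/1000 \<and> (A - q \<le> 1001/1000 \<or> p + 3*E \<le> 4001/1000)"
proof -
  have bounds: "\<bar>det2 (u, v) (- E, q)\<bar> < of_int 2 * \<bar>D\<bar> \<and> \<bar>det2 (p, A) (u, v)\<bar> < of_int 3 * \<bar>D\<bar>"
    if "- E + 1/1000 \<le> u" "u \<le> - E + 1/1000 + 4" "1/1000 \<le> v" "v \<le> 1/1000 + 1" for u v
  proof -
    have "\<bar>u * q - v * (- E)\<bar> \<le> 3 * (1001/1000) + (1001/1000) * 2"
      by (rule abs_det_le) (use that q E in \<open>auto simp: abs_le_iff\<close>)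
    moreover have "\<bar>p * v - A * u\<bar> \<le> (1001/1000) * (1001/1000) + 2 * 3"
      by (rule abs_det_le) (use that p A E in \<open>auto simp: abs_le_iff\<close>)
    ultimately show ?thesis using L(2) by (simp add: det2_def)
  qed
  obtain i j :: int where "\<bar>i\<bar> < 2" "\<bar>j\<bar> < 3"
    "- E + 1/1000 \<le> of_int i * p - of_int j * E" "of_int i * p - of_int j * E \<le> - E + 1/1000 + 4"
    "1/1000 \<le> of_int i * A + of_int j * q" "of_int i * A + of_int j * q \<le> 1/1000 + 1"
    by (rule hits_boxes_basis_point[where x = "- E + 1/1000" and y = "1/1000", OF L(1,3) a c det _ bounds]) (use L(2) in auto)
  moreover have "i \<in> {-1, 0, 1}" "j \<in> {-2, -1, 0, 1, 2}" using calculation(1,2) by auto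
  ultimately show ?thesis using p A E q by auto
qed

lemma minus_square_constraint:
  fixes p A E q :: real
  assumes L: "det_multiples L D" "63/20 \<le> \<bar>D\<bar>" "hits_boxes L 2 2"
    and a: "(p, A) \<in> L" and c: "(- E, q) \<in> L" and det: "\<bar>det2 (p, A) (- E, q)\<bar> = \<bar>D\<bar>"
    and p: "1/1000 \<le> p" "p \<le> 1001/1000" and A: "21/20 < A" "A \<le> 2"
    and E: "21/20 < E" "E \<le> 2" and q: "1/1000 \<le> q" "q \<le> 1001/1000"
  shows "A + q \<le> 2001/1000 \<or> p + E \<le> 2001/1000"
proof -
  have bounds: "\<bar>det2 (u, v) (- E, q)\<bar> < of_int 2 * \<bar>D\<bar> \<and> \<bar>det2 (p, A) (u, v)\<bar> < of_int 2 * \<bar>D\<bar>"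
    if "1/1000 \<le> u" "u \<le> 1/1000 + 2" "- q + 1/1000 \<le> v" "v \<le> - q + 1/1000 + 2" for u v
  proof -
    have "\<bar>u * q - v * (- E)\<bar> \<le> (2001/1000) * (1001/1000) + 2 * 2"
      by (rule abs_det_le) (use that q E in \<open>auto simp: abs_le_iff\<close>)
    moreover have "\<bar>p * v - A * u\<bar> \<le> (1001/1000) * 2 + 2 * (2001/1000)"
      by (rule abs_det_le) (use that p A q in \<open>auto simp: abs_le_iff\<close>)
    ultimately show ?thesis using L(2) by (simp add: det2_def)
  qed
  obtain i j :: int where "\<bar>i\<bar> < 2" "\<bar>j\<bar> < 2"
    "1/1000 \<le> of_int i * p - of_int j * E" "of_int i * p - of_int j * E \<le> 1/1000 + 2"
    "- q + 1/1000 \<le> of_int i * A + of_int j * q" "of_int i * A + of_int j * q \<le> - q + 1/1000 + 2"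
    by (rule hits_boxes_basis_point[where x = "1/1000" and y = "- q + 1/1000", OF L(1,3) a c det _ bounds]) (use L(2) in auto)
  moreover have "i \<in> {-1, 0, 1}" "j \<in> {-1, 0, 1}" using calculation(1,2) by auto
  ultimately show ?thesis using p A E q by auto
qed

lemma minus_det_estimate_steep:
  fixes p q A E :: real
  assumes "0 \<le> p" "p \<le> 1001/1000" "p + 3*E \<le> 4001/1000" "0 \<le> q" "q \<le> 1001/1000"
    "0 \<le> A" "A \<le> 2" "0 \<le> E"
  shows "p*q + A*E < 63/20"
proof -
  have "A*E \<le> 2*E" by (rule mult_right_mono) (use assms in auto)
  moreover have "p*(3*q - 2) \<le> p*(1003/1000)" by (rule mult_left_mono) (use assms in auto)
  ultimately show ?thesis using assms by (simp add: algebra_simps)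
qed

lemma minus_det_estimate_balanced:
  fixes p q A E :: real
  assumes "0 \<le> p" "p \<le> 1001/1000" "0 \<le> q" "q \<le> 1001/1000"
    and "21/20 \<le> A" "A \<le> 2" "21/20 \<le> E" "E \<le> 2"
    and "A \<le> q + 1001/1000" "E \<le> p + 1001/1000" "p + 2*E \<le> 4001/1000"
    and "2*A + q \<le> 4001/1000" "A + q \<le> 2001/1000"
  shows "p*q + A*E < 63/20"
proof (cases "p \<le> 2/3")
  case True
  have "A*E \<le> A*(p + 1001/1000)" by (rule mult_left_mono) (use assms in auto)
  moreover have "p*(q + A) \<le> (2/3)*(2001/1000)" by (rule mult_mono) (use assms True in auto)
  ultimately show ?thesis using assms by (simp add: algebra_simps)
next
  case False
  have "A*(2*E) \<le> A*(4001/1000 - p)" by (rule mult_left_mono) (use assms in auto)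
  then have "2*(A*E) \<le> 4001/1000*A - p*A" by (simp add: algebra_simps)
  moreover have "p*q \<le> p*(2001/1000 - A)" by (rule mult_left_mono) (use assms in auto)
  then have "p*q \<le> 2001/1000*p - p*A" by (simp add: algebra_simps)
  moreover have "0 \<le> (p - 2/3)*(A - 21/20)" using False assms by simp
  then have "21/20*p + 2/3*A - 7/10 \<le> p*A" by (simp add: field_simps)
  ultimately show ?thesis using assms by linarith
qed

lemma minus_det_estimate:
  fixes p A E q :: real
  assumes H: "p + 2*E \<le> 4001/1000 \<and> (A - q \<le> 1001/1000 \<or> p + 3*E \<le> 4001/1000)"
    and V: "q + 2*A \<le> 4001/1000 \<and> (E - p \<le> 1001/1000 \<or> q + 3*A \<le> 4001/1000)"
    and S: "A + q \<le> 2001/1000 \<or> p + E \<le> 2001/1000"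
    and p: "1/1000 \<le> p" "p \<le> 1001/1000" and A: "21/20 < A" "A \<le> 2"
    and E: "21/20 < E" "E \<le> 2" and q: "1/1000 \<le> q" "q \<le> 1001/1000"
  shows "p*q + A*E < 63/20"
proof -
  consider "p + 3*E \<le> 4001/1000" | "q + 3*A \<le> 4001/1000"
    | "A - q \<le> 1001/1000" "E - p \<le> 1001/1000" "A + q \<le> 2001/1000"
    | "A - q \<le> 1001/1000" "E - p \<le> 1001/1000" "p + E \<le> 2001/1000"
    using H V S by blast
  then show ?thesis
  proof cases
    case 1
    then show ?thesis by (intro minus_det_estimate_steep) (use p q A E in auto)
  next
    case 2
    then have "q*p + E*A < 63/20" by (intro minus_det_estimate_steep) (use p q A E in auto)
    then show ?thesis by (simp add: mult.commute)
  next
    case 3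
    then show ?thesis by (intro minus_det_estimate_balanced) (use p q A E H V in auto)
  next
    case 4
    then have "q*p + E*A < 63/20" by (intro minus_det_estimate_balanced) (use p q A E H V in auto)
    then show ?thesis by (simp add: mult.commute)
  qed
qed

lemma minus_case_impossible:
  fixes p A E q :: real
  assumes L: "det_multiples L D" "63/20 \<le> \<bar>D\<bar>" "hits_boxes L 4 1" "hits_boxes L 1 4" "hits_boxes L 2 2"
    and sym: "\<And>w. w \<in> L \<Longrightarrow> - w \<in> L"
    and a: "(p, A) \<in> L" and c: "(- E, q) \<in> L" and det: "\<bar>det2 (p, A) (- E, q)\<bar> = \<bar>D\<bar>"
    and p: "1/1000 \<le> p" "p \<le> 1001/1000" and A: "21/20 < A" "A \<le> 2"
    and E: "21/20 < E" "E \<le> 2" and q: "1/1000 \<le> q" "q \<le> 1001/1000"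
  shows False
proof -
  have H: "p + 2*E \<le> 4001/1000 \<and> (A - q \<le> 1001/1000 \<or> p + 3*E \<le> 4001/1000)"
    by (rule minus_horizontal_constraint[OF L(1-3) a c det p A E q])
  \<comment> \<open>the rotation (x, y) \<mapsto> (-y, x) takes (p, A) to (- A, p) and - (- E, q) to (q, E)\<close>
  have V: "q + 2*A \<le> 4001/1000 \<and> (E - p \<le> 1001/1000 \<or> q + 3*A \<le> 4001/1000)"
  proof (rule minus_horizontal_constraint[of "prod.swap ` apsnd uminus ` L" D])
    show "det_multiples (prod.swap ` apsnd uminus ` L) D"
      by (intro det_multiples_image[OF det_multiples_image[OF L(1)]]) simp_all
    show "hits_boxes (prod.swap ` apsnd uminus ` L) 4 1"
      by (intro hits_boxes_swap hits_boxes_apsnd_uminus L(4))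
    have "(E, - q) \<in> L" using sym[OF c] by simp
    then show "(q, E) \<in> prod.swap ` apsnd uminus ` L"
      by (intro image_eqI[of _ prod.swap "(E, q)"] image_eqI[of _ "apsnd uminus" "(E, - q)"]) auto
    show "(- A, p) \<in> prod.swap ` apsnd uminus ` L"
      using a by (intro image_eqI[of _ prod.swap "(p, - A)"] image_eqI[of _ "apsnd uminus" "(p, A)"]) auto
    show "\<bar>det2 (q, E) (- A, p)\<bar> = \<bar>D\<bar>" using det by (simp add: det2_def algebra_simps)
  qed (use L(2) p A E q in auto)
  have S: "A + q \<le> 2001/1000 \<or> p + E \<le> 2001/1000"
    by (rule minus_square_constraint[OF L(1,2,5) a c det p A E q])
  have "\<bar>D\<bar> = p*q + A*E"
    using det p q A E by (simp add: det2_def)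
  then show False using minus_det_estimate[OF H V S p A E q] L(2) by linarith
qed

lemma basis_abs_det_eq:
  assumes L: "det_multiples L D" "63/20 \<le> \<bar>D\<bar>" and a: "(p, A) \<in> L" and c: "(E, q) \<in> L"
    and p: "1/1000 \<le> p" "p \<le> 1001/1000" and A: "21/20 < A" "A \<le> 2"
    and E: "21/20 < \<bar>E\<bar>" "\<bar>E\<bar> \<le> 2" and q: "1/1000 \<le> q" "q \<le> 1001/1000"
  shows "\<bar>det2 (p, A) (E, q)\<bar> = \<bar>D\<bar>"
proof -
  have "\<bar>det2 (p, A) (E, q)\<bar> \<le> (1001/1000) * (1001/1000) + 2 * 2"
    unfolding det2_def by (rule abs_det_le) (use p A E q in \<open>auto simp: abs_le_iff\<close>)
  then have "\<bar>det2 (p, A) (E, q)\<bar> < 2 * \<bar>D\<bar>" using L(2) by linarith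
  then have "det2 (p, A) (E, q) = 0 \<or> \<bar>det2 (p, A) (E, q)\<bar> = \<bar>D\<bar>"
    by (rule det_multiples_abs_det_cases[OF L(1) a c])
  moreover have "det2 (p, A) (E, q) \<noteq> 0"
  proof -
    have "p * q \<le> (1001/1000) * (1001/1000)" by (rule mult_mono) (use p q in auto)
    also have "\<dots> < A * \<bar>E\<bar>" by (rule mult_strict_mono') (use A E in auto)
    also have "\<dots> = \<bar>A * E\<bar>" using A by (simp add: abs_mult)
    finally have "p * q < \<bar>A * E\<bar>" .
    moreover have "0 \<le> p * q" using p q by simp
    ultimately have "p * q \<noteq> A * E" by auto
    then show ?thesis by (simp add: det2_def)
  qed
  ultimately show ?thesis by blast
qed

lemma tall_vector_impossible:
  assumes L: "det_multiples L D" "63/20 \<le> \<bar>D\<bar>" "hits_boxes L 4 1" "hits_boxes L 1 4" "hits_boxes L 2 2"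
    and sym: "\<And>w. w \<in> L \<Longrightarrow> - w \<in> L" and short: "no_short_vector L (21/20)"
    and a: "(p, A) \<in> L" and p: "1/1000 \<le> p" "p \<le> 1001/1000" and A: "21/20 < A" "A \<le> 2"
  shows False
proof -
  obtain E q where c: "(E, q) \<in> L" and E: "-2 \<le> E" "E \<le> 2" and q: "1/1000 \<le> q" "q \<le> 1001/1000"
  proof -
    obtain c where "c \<in> L" "-2 \<le> fst c" "fst c \<le> -2 + 4" "1/1000 \<le> snd c" "snd c \<le> 1/1000 + 1"
      using hits_boxesE[OF L(3)] .
    then show ?thesis by (intro that[of "fst c" "snd c"]) auto
  qed
  have "(E, q) \<noteq> 0" using q by (auto simp: zero_prod_def)
  then have "21/20 < \<bar>E\<bar>"
    using short[unfolded no_short_vector_def, rule_format, OF c] q by auto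
  then have det: "\<bar>det2 (p, A) (E, q)\<bar> = \<bar>D\<bar>"
    using basis_abs_det_eq[OF L(1,2) a c p A] E q by auto
  show False
  proof (cases "0 < E")
    case True
    show False
      by (rule plus_case_impossible[OF L(1-4) a c det p A _ E(2) q]) (use True \<open>21/20 < \<bar>E\<bar>\<close> in auto)
  next
    case False
    show False
    proof (rule minus_case_impossible[OF L sym a _ _ p A _ _ q])
      show "(- (- E), q) \<in> L" "\<bar>det2 (p, A) (- (- E), q)\<bar> = \<bar>D\<bar>" using c det by simp_all
    qed (use False E \<open>21/20 < \<bar>E\<bar>\<close> in auto)
  qed
qed

lemma tall_vector_impossible_abs:
  assumes L: "det_multiples L D" "63/20 \<le> \<bar>D\<bar>" "hits_boxes L 4 1" "hits_boxes L 1 4" "hits_boxes L 2 2"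
    and sym: "\<And>w. w \<in> L \<Longrightarrow> - w \<in> L" and short: "no_short_vector L (21/20)"
    and a: "(p, A) \<in> L" and p: "1/1000 \<le> p" "p \<le> 1001/1000" and A: "21/20 < \<bar>A\<bar>" "\<bar>A\<bar> \<le> 2"
  shows False
proof (cases "0 < A")
  case True
  then show False using tall_vector_impossible[OF L sym short a p] A by simp
next
  case False
  \<comment> \<open>reflect in the horizontal axis, which preserves the family of boxes\<close>
  show False
  proof (rule tall_vector_impossible[of "apsnd uminus ` L" D p "- A"])
    show "det_multiples (apsnd uminus ` L) D" using L(1) by (rule det_multiples_image) simp
    show "hits_boxes (apsnd uminus ` L) 4 1" "hits_boxes (apsnd uminus ` L) 1 4"
      "hits_boxes (apsnd uminus ` L) 2 2"
      using L(3-5) by (simp_all add: hits_boxes_apsnd_uminus)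
    show "- w \<in> apsnd uminus ` L" if "w \<in> apsnd uminus ` L" for w
      using uminus_mem_apsnd_uminus_image[OF sym that] .
    show "no_short_vector (apsnd uminus ` L) (21/20)" using short by (rule no_short_vector_apsnd_uminus)
    show "(p, - A) \<in> apsnd uminus ` L" using a by force
  qed (use L(2) p A False in auto)
qed

lemma mem_lattice_iff: "p \<in> lattice u v \<longleftrightarrow> (\<exists>i j::int. p = of_int i *\<^sub>R u + of_int j *\<^sub>R v)"
  unfolding lattice_def by blast

lemma lattice_det_multiples: "det_multiples (lattice u v) (det2 u v)"
  unfolding det_multiples_def
proof (intro ballI)
  fix p q assume "p \<in> lattice u v" "q \<in> lattice u v"
  then obtain i j k l :: int where "p = of_int i *\<^sub>R u + of_int j *\<^sub>R v" "q = of_int k *\<^sub>R u + of_int l *\<^sub>R v"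
    unfolding mem_lattice_iff by blast
  then have "det2 p q = of_int (i * l - j * k) * det2 u v" by (simp add: det2_def algebra_simps)
  then show "\<exists>k::int. det2 p q = of_int k * det2 u v" by blast
qed

lemma uminus_mem_lattice: "p \<in> lattice u v \<Longrightarrow> - p \<in> lattice u v"
  unfolding mem_lattice_iff by (metis of_int_minus scaleR_minus_left minus_add_distrib)

lemma basis_mem_lattice: "u \<in> lattice u v" "v \<in> lattice u v"
  unfolding mem_lattice_iff by (metis of_int_0 of_int_1 scaleR_zero_left scaleR_one add.right_neutral add.left_neutral)+

lemma finite_lattice_square:
  assumes "det2 u v \<noteq> 0"
  shows "finite {p \<in> lattice u v. \<bar>fst p\<bar> \<le> r \<and> \<bar>snd p\<bar> \<le> r}"
proof -
  define S where "S = \<bar>fst u\<bar> + \<bar>snd u\<bar> + \<bar>fst v\<bar> + \<bar>snd v\<bar>"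
  define N where "N = \<lceil>r * S / \<bar>det2 u v\<bar>\<rceil>"
  have bound: "\<bar>k\<bar> \<le> N" if "\<bar>of_int k * det2 u v\<bar> \<le> r * S" for k :: int
  proof -
    have "\<bar>of_int k\<bar> \<le> r * S / \<bar>det2 u v\<bar>"
      using that assms by (simp add: abs_mult le_divide_eq)
    then show ?thesis unfolding N_def by linarith
  qed
  have "{p \<in> lattice u v. \<bar>fst p\<bar> \<le> r \<and> \<bar>snd p\<bar> \<le> r}
      \<subseteq> (\<lambda>(i, j). of_int i *\<^sub>R u + of_int j *\<^sub>R v) ` ({-N..N} \<times> {-N..N})"
  proof
    fix p assume "p \<in> {p \<in> lattice u v. \<bar>fst p\<bar> \<le> r \<and> \<bar>snd p\<bar> \<le> r}"
    then have p: "p \<in> lattice u v" "\<bar>fst p\<bar> \<le> r" "\<bar>snd p\<bar> \<le> r" by auto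
    obtain i j :: int where ij: "p = of_int i *\<^sub>R u + of_int j *\<^sub>R v"
      "det2 p v = of_int i * det2 u v" "det2 u p = of_int j * det2 u v"
      using det_multiples_basis_coords[OF lattice_det_multiples basis_mem_lattice p(1) refl assms] .
    have "0 \<le> r * \<bar>fst u\<bar>" "0 \<le> r * \<bar>snd u\<bar>" "0 \<le> r * \<bar>fst v\<bar>" "0 \<le> r * \<bar>snd v\<bar>"
      using p(2) by simp_all
    then have "r * \<bar>snd v\<bar> + r * \<bar>fst v\<bar> \<le> r * S" "\<bar>fst u\<bar> * r + \<bar>snd u\<bar> * r \<le> r * S"
      unfolding S_def by (simp_all add: distrib_left mult.commute[of _ r])
    moreover have "\<bar>det2 p v\<bar> \<le> r * \<bar>snd v\<bar> + r * \<bar>fst v\<bar>" "\<bar>det2 u p\<bar> \<le> \<bar>fst u\<bar> * r + \<bar>snd u\<bar> * r"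
      unfolding det2_def by (rule abs_det_le; use p in simp)+
    ultimately have "\<bar>i\<bar> \<le> N" "\<bar>j\<bar> \<le> N"
      unfolding ij(2,3) by (auto intro: bound)
    then show "p \<in> (\<lambda>(i, j). of_int i *\<^sub>R u + of_int j *\<^sub>R v) ` ({-N..N} \<times> {-N..N})"
      using ij(1) by (intro image_eqI[of _ _ "(i, j)"]) auto
  qed
  then show ?thesis by (rule finite_subset) simp
qed

lemma piercing_lattice_abs_det_lt:
  assumes "det2 u v \<noteq> 0"
    and hits: "hits_boxes (lattice u v) 4 1" "hits_boxes (lattice u v) 1 4" "hits_boxes (lattice u v) 2 2"
  shows "\<bar>det2 u v\<bar> < 63/20"
proof (rule ccontr)
  let ?L = "lattice u v" and ?D = "det2 u v"
  assume "\<not> \<bar>?D\<bar> < 63/20"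
  then have big: "63/20 \<le> \<bar>?D\<bar>" by simp
  have sym: "\<And>w. w \<in> ?L \<Longrightarrow> - w \<in> ?L" by (rule uminus_mem_lattice)
  have short: "no_short_vector ?L (21/20)"
    using no_short_vector_if_hits_square[OF lattice_det_multiples big hits(3) sym
        finite_lattice_square[OF assms(1)]] .
  obtain p A where a: "(p, A) \<in> ?L" and p: "1/1000 \<le> p" "p \<le> 1001/1000" and A: "-2 \<le> A" "A \<le> 2"
  proof -
    obtain a where "a \<in> ?L" "1/1000 \<le> fst a" "fst a \<le> 1/1000 + 1" "-2 \<le> snd a" "snd a \<le> -2 + 4"
      using hits_boxesE[OF hits(2)] .
    then show ?thesis by (intro that[of "fst a" "snd a"]) auto
  qed
  have "(p, A) \<noteq> 0" using p by (auto simp: zero_prod_def)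
  then have "21/20 < \<bar>A\<bar>"
    using short[unfolded no_short_vector_def, rule_format, OF a] p by auto
  moreover have "\<bar>A\<bar> \<le> 2" using A by (simp add: abs_le_iff)
  ultimately show False
    using tall_vector_impossible_abs[OF lattice_det_multiples big hits sym short a p] by blast
qed

section \<open>A periodic piercing set\<close>

lemma hits_boxes_integer_points:
  assumes "\<And>i j. \<exists>d\<in>Dx. \<exists>e\<in>Dy. (i + d, j + e) \<in> S"
    and "\<And>d. d \<in> Dx \<Longrightarrow> 0 \<le> d \<and> of_int d + 1 \<le> \<alpha>" "\<And>e. e \<in> Dy \<Longrightarrow> 0 \<le> e \<and> of_int e + 1 \<le> \<beta>"
  shows "hits_boxes {(of_int i, of_int j) | i j. (i, j) \<in> S} \<alpha> \<beta>"
  unfolding hits_boxes_def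
proof (intro allI)
  fix x y :: real
  obtain d e where de: "0 \<le> d" "of_int d + 1 \<le> \<alpha>" "0 \<le> e" "of_int e + 1 \<le> \<beta>"
    and S: "(\<lceil>x\<rceil> + d, \<lceil>y\<rceil> + e) \<in> S"
    using assms by meson
  have "x \<le> of_int \<lceil>x\<rceil>" "of_int \<lceil>x\<rceil> < x + 1" "y \<le> of_int \<lceil>y\<rceil>" "of_int \<lceil>y\<rceil> < y + 1"
    by linarith+
  moreover have "(0::real) \<le> of_int d" "(0::real) \<le> of_int e" using de by simp_all
  ultimately have ineqs: "x \<le> of_int (\<lceil>x\<rceil> + d) \<and> of_int (\<lceil>x\<rceil> + d) \<le> x + \<alpha> \<and>
      y \<le> of_int (\<lceil>y\<rceil> + e) \<and> of_int (\<lceil>y\<rceil> + e) \<le> y + \<beta>"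
    unfolding of_int_add using de by linarith
  have mem: "(of_int (\<lceil>x\<rceil> + d), of_int (\<lceil>y\<rceil> + e)) \<in> {(of_int i, of_int j) | i j. (i, j) \<in> S}"
    using S by blast
  show "\<exists>p\<in>{(of_int i, of_int j) | i j. (i, j) \<in> S}.
      x \<le> fst p \<and> fst p \<le> x + \<alpha> \<and> y \<le> snd p \<and> snd p \<le> y + \<beta>"
    by (rule bexI[OF _ mem]) (use ineqs in simp)
qed

definition pattern_residues :: "(int \<times> int) set" where
  "pattern_residues = {(0, 3), (2, 2), (1, 1), (3, 1), (2, 0)}"

definition pattern :: "(int \<times> int) set" where
  "pattern = {(i, j). (i mod 4, j mod 4) \<in> pattern_residues}"

definition P0 :: "(real \<times> real) set" where
  "P0 = {(of_int i, of_int j) | i j. (i, j) \<in> pattern}"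

lemma pattern_mem_iff:
  "(i + d, j + e) \<in> pattern \<longleftrightarrow> ((i mod 4 + d) mod 4, (j mod 4 + e) mod 4) \<in> pattern_residues"
  unfolding pattern_def by (simp add: mod_add_left_eq)

lemma mod_4_cases: "(k::int) mod 4 = 0 \<or> k mod 4 = 1 \<or> k mod 4 = 2 \<or> k mod 4 = 3"
  by auto

lemma pattern_meets_rows: "\<exists>d\<in>{0, 1, 2, 3}. \<exists>e\<in>{0}. (i + d, j + e) \<in> pattern"
  unfolding pattern_mem_iff using mod_4_cases[of i] mod_4_cases[of j] by (elim disjE) (simp_all add: pattern_residues_def)

lemma pattern_meets_columns: "\<exists>d\<in>{0}. \<exists>e\<in>{0, 1, 2, 3}. (i + d, j + e) \<in> pattern"
  unfolding pattern_mem_iff using mod_4_cases[of i] mod_4_cases[of j] by (elim disjE) (simp_all add: pattern_residues_def)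

lemma pattern_meets_squares: "\<exists>d\<in>{0, 1}. \<exists>e\<in>{0, 1}. (i + d, j + e) \<in> pattern"
  unfolding pattern_mem_iff using mod_4_cases[of i] mod_4_cases[of j] by (elim disjE) (simp_all add: pattern_residues_def)

lemma hits_boxes_P0: "hits_boxes P0 4 1" "hits_boxes P0 1 4" "hits_boxes P0 2 2"
  unfolding P0_def
  by (rule hits_boxes_integer_points[OF pattern_meets_rows] hits_boxes_integer_points[OF pattern_meets_columns]
      hits_boxes_integer_points[OF pattern_meets_squares]; auto)+

lemma div_4_mem_bound:
  fixes k :: int and r :: real
  assumes "- r \<le> of_int k" "of_int k \<le> r"
  shows "k div 4 \<in> {-(\<lceil>r/4\<rceil> + 1)..\<lceil>r/4\<rceil> + 1}"
proof -
  have "of_int k = 4 * of_int (k div 4) + (of_int (k mod 4) :: real)"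
    by (metis mult_div_mod_eq of_int_add of_int_mult of_int_numeral)
  moreover have "0 \<le> (of_int (k mod 4) :: real)" "(of_int (k mod 4) :: real) \<le> 3" by simp_all
  moreover have "r/4 \<le> of_int \<lceil>r/4\<rceil>" by (rule le_of_int_ceiling)
  ultimately have "- of_int (\<lceil>r/4\<rceil> + 1) \<le> (of_int (k div 4) :: real)"
    "of_int (k div 4) \<le> (of_int (\<lceil>r/4\<rceil> + 1) :: real)"
    using assms by linarith+
  then show ?thesis by simp
qed

lemma P0_square_subset:
  fixes r :: real
  defines "N \<equiv> \<lceil>r/4\<rceil> + 1"
  shows "P0 \<inter> ({-r..r} \<times> {-r..r}) \<subseteq>
    (\<lambda>((a, b), (k, l)). (of_int (4 * k + a), of_int (4 * l + b))) ` (pattern_residues \<times> ({-N..N} \<times> {-N..N}))"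
    (is "_ \<subseteq> ?g ` ?T")
proof
  fix p assume "p \<in> P0 \<inter> ({-r..r} \<times> {-r..r})"
  then obtain i j where p: "p = (of_int i, of_int j)" "(i mod 4, j mod 4) \<in> pattern_residues"
    and "- r \<le> of_int i" "of_int i \<le> r" "- r \<le> of_int j" "of_int j \<le> r"
    unfolding P0_def pattern_def by auto
  then have "((i mod 4, j mod 4), (i div 4, j div 4)) \<in> ?T"
    unfolding N_def using div_4_mem_bound by auto
  moreover have "p = ?g ((i mod 4, j mod 4), (i div 4, j div 4))"
    unfolding p by (simp only: prod.case mult_div_mod_eq)
  ultimately show "p \<in> ?g ` ?T" by blast
qed

lemma card_P0_square_le:
  assumes "0 \<le> r"
  shows "finite (P0 \<inter> ({-r..r} \<times> {-r..r}))" "real (card (P0 \<inter> ({-r..r} \<times> {-r..r}))) \<le> 5 * (r/2 + 5)^2"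
proof -
  define N where "N = \<lceil>r/4\<rceil> + 1"
  define T where "T = pattern_residues \<times> ({-N..N} \<times> {-N..N})"
  define g :: "(int \<times> int) \<times> (int \<times> int) \<Rightarrow> real \<times> real"
    where "g = (\<lambda>((a, b), (k, l)). (of_int (4 * k + a), of_int (4 * l + b)))"
  have cover: "P0 \<inter> ({-r..r} \<times> {-r..r}) \<subseteq> g ` T"
    unfolding g_def T_def N_def by (rule P0_square_subset)
  have "finite T" by (simp add: T_def pattern_residues_def)
  then show "finite (P0 \<inter> ({-r..r} \<times> {-r..r}))" using cover by (rule finite_surj)
  have "card (P0 \<inter> ({-r..r} \<times> {-r..r})) \<le> card (g ` T)"
    using \<open>finite T\<close> cover by (intro card_mono) auto
  also have "\<dots> \<le> card T" using \<open>finite T\<close> by (rule card_image_le)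
  finally have "real (card (P0 \<inter> ({-r..r} \<times> {-r..r}))) \<le> real (card T)" by simp
  also have "\<dots> = 5 * (of_int (2 * N + 1))^2"
  proof -
    have "0 \<le> N" using assms by (simp add: N_def)
    then show ?thesis
      by (simp add: T_def pattern_residues_def card_cartesian_product power2_eq_square)
  qed
  also have "\<dots> \<le> 5 * (r/2 + 5)^2"
  proof -
    have "0 \<le> (of_int (2 * N + 1) :: real)" "of_int (2 * N + 1) \<le> r/2 + 5"
      using assms ceiling_correct[of "r/4"] unfolding N_def by simp_all
    then show ?thesis by (simp add: power_mono)
  qed
  finally show "real (card (P0 \<inter> ({-r..r} \<times> {-r..r}))) \<le> 5 * (r/2 + 5)^2" .
qed

lemma density_P0_le: "density P0 \<le> ereal (63/200)"
  unfolding density_def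
proof (rule Limsup_bounded)
  show "\<forall>\<^sub>F r in at_top. box_count P0 r / ereal ((2 * r)\<^sup>2) \<le> ereal (63/200)"
    unfolding eventually_at_top_linorder
  proof (intro exI allI impI)
    fix r :: real assume r: "3000 \<le> r"
    have "3000 * r \<le> r * r" using r by (intro mult_right_mono) auto
    moreover have "5 * (r/2 + 5)^2 = 5/4 * (r * r) + 25 * r + 125" "63/200 * (2 * r)\<^sup>2 = 63/50 * (r * r)"
      by (simp_all add: power2_eq_square algebra_simps)
    ultimately have "5 * (r/2 + 5)^2 \<le> 63/200 * (2 * r)\<^sup>2" using r by linarith
    then have "real (card (P0 \<inter> ({-r..r} \<times> {-r..r}))) \<le> 63/200 * (2 * r)\<^sup>2"
      using card_P0_square_le(2)[of r] r by simp
    moreover have "0 < (2 * r)\<^sup>2" using r by simp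
    ultimately show "box_count P0 r / ereal ((2 * r)\<^sup>2) \<le> ereal (63/200)"
      using card_P0_square_le(1)[of r] r by (simp add: box_count_def divide_le_eq)
  qed
qed

definition three_boxes :: "(real \<times> real) set set" where
  "three_boxes = {{0..1} \<times> {0..4}, {0..2} \<times> {0..2}, {0..4} \<times> {0..1}}"

lemma piercing_three_boxes_iff:
  "piercing three_boxes P \<longleftrightarrow> hits_boxes P 1 4 \<and> hits_boxes P 2 2 \<and> hits_boxes P 4 1"
  by (simp add: piercing_def three_boxes_def hits_boxes_iff_translates)

lemma card_three_boxes: "card three_boxes = 3"
  by (simp add: three_boxes_def times_eq_iff Icc_eq_Icc)

lemma is_rect_box: "0 < a \<Longrightarrow> 0 < b \<Longrightarrow> is_rect ({0..a} \<times> {0..b})"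
  unfolding is_rect_def by blast

lemma three_boxes_rects: "R \<in> three_boxes \<Longrightarrow> is_rect R"
  unfolding three_boxes_def by (auto intro: is_rect_box)

lemma pi_lat_three_boxes_ge: "ereal (20/63) \<le> pi_lat three_boxes"
  unfolding pi_lat_def
proof (rule Inf_greatest)
  fix x assume "x \<in> {ereal (1 / \<bar>det2 u v\<bar>) | u v. det2 u v \<noteq> 0 \<and> piercing three_boxes (lattice u v)}"
  then obtain u v where x: "x = ereal (1 / \<bar>det2 u v\<bar>)" and "det2 u v \<noteq> 0"
    and "piercing three_boxes (lattice u v)" by blast
  then have "\<bar>det2 u v\<bar> < 63/20"
    using piercing_lattice_abs_det_lt by (auto simp: piercing_three_boxes_iff)
  then show "ereal (20/63) \<le> x" using \<open>det2 u v \<noteq> 0\<close> by (simp add: x le_divide_eq)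
qed

lemma pi_dens_three_boxes_le: "pi_dens three_boxes \<le> ereal (63/200)"
proof -
  have "pi_dens three_boxes \<le> density P0"
    unfolding pi_dens_def by (rule Inf_lower) (auto simp: piercing_three_boxes_iff hits_boxes_P0)
  then show ?thesis using density_P0_le by (rule order_trans)
qed

theorem theorem4:
  shows "\<exists>F0 :: (real \<times> real) set set. \<exists>\<epsilon>::real.
           finite F0 \<and> card F0 = 3 \<and> (\<forall>R\<in>F0. is_rect R) \<and> \<epsilon> > 0 \<and>
           pi_lat F0 \<ge> pi_dens F0 + ereal \<epsilon>"
proof (intro exI conjI ballI)
  show "finite three_boxes" by (simp add: three_boxes_def)
  show "card three_boxes = 3" by (rule card_three_boxes)
  show "is_rect R" if "R \<in> three_boxes" for R using that by (rule three_boxes_rects)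
  show "(0::real) < 31/12600" by simp
  have "pi_dens three_boxes + ereal (31/12600) \<le> ereal (63/200) + ereal (31/12600)"
    using pi_dens_three_boxes_le by (rule add_right_mono)
  also have "\<dots> = ereal (20/63)" by simp
  also have "\<dots> \<le> pi_lat three_boxes" by (rule pi_lat_three_boxes_ge)
  finally show "pi_dens three_boxes + ereal (31/12600) \<le> pi_lat three_boxes" .
qed

end
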